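(* Let $P\in O(V,K)$, $p,x\in V$ and $X\in\mathfrak{o}(V,K)$, and let $P^\vee$ be the $(n+3)\times(n+3)$ matrix $\begin{pmatrix}1&p^*\\0&P\end{pmatrix}$. Then for every $Y\in\mathfrak{o}(V,K)$ and every $y\in V$, $$\big\langle \big(PXP^{-1}+L_{Pp,Px},\,(Px)^*\big)\,\big|\,(Y,y^* )\big\rangle=\big\langle (X,x^* )\,\big|\,(P^\vee)^{-1}(Y,y^* )P^\vee\big\rangle .$$ In other words, if $\widetilde{\mathrm{Ad}}_{P^\vee}$ denotes the linear map of $\mathfrak g^\vee$ defined by $(\widetilde{\mathrm{Ad}}_{P^\vee}a)^\sharp=\mathrm{Ad}^T_{(P^\vee)^{-1}}(a^\sharp)$ for all $a\in\mathfrak g^\vee$ (where $\mathrm{Ad}^T_{g}(\mu)=\mu\circ\mathrm{Ad}_g$ and $\mathrm{Ad}_g b=gbg^{-1}$), then $\widetilde{\mathrm{Ad}}_{(P,p^* )}(X,x^* )=\big(PXP^{-1}+L_{Pp,Px},(Px)^*\big)$.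
   Context: Let $n\ge 0$ be an integer and let $\widetilde K$ be a real symmetric $n\times n$ matrix with $\widetilde K^2=I_n$. Let $V=\mathbb R^{n+2}$ with standard basis $e_1,\dots,e_{n+2}$, and let $K=\begin{pmatrix}0&0&1\\0&\widetilde K&0\\1&0&0\end{pmatrix}$ (block sizes $1,n,1$). For $x,w\in V$ write $x^*=x^TK$ (a row vector) and $L_{u,w}=u\,w^*-w\,u^*$ (an $(n+2)\times(n+2)$ matrix). Let $O(V,K)=\{P: P^TKP=K\}$ and $\mathfrak{o}(V,K)=\{X: X^TK+KX=0\}$. Let $\mathfrak g^\vee$ be the Lie algebra of $(n+3)\times(n+3)$ matrices $\begin{pmatrix}0&x^*\\0&X\end{pmatrix}$ with $X\in\mathfrak o(V,K)$, $x\in V$ (the first row/column indexed by an extra basis vector $e_0$); such a matrix is denoted $(X,x^* )$. On $\mathfrak g^\vee$ define the nondegenerate bilinear form $\langle (X,x^* )\,|\,(\overline X,\overline x^{\,*})\rangle=\tfrac12\mathrm{tr}(X\overline X)+\overline x^{\,T}Kx$, and for $a\in\mathfrak g^\vee$ let $a^\sharp$ be the linear functional $b\mapsto\langle a|b\rangle$. Products such as $(P^\vee)^{-1}(Y,y^* )P^\vee$ are matrix products; the result lies again in $\mathfrak g^\vee$. *)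

theory Defs
  imports "Jordan_Normal_Form.Matrix"
begin

(* Indices are 0-based: V-index i (0..n+1) corresponds to e_{i+1};
   in the (n+3)x(n+3) matrices index 0 is e_0 and index i+1 is e_{i+1}. *)

definition mtrace :: "real mat \<Rightarrow> real" where
  "mtrace A = (\<Sum>i<dim_row A. A $$ (i, i))"

definition minv :: "real mat \<Rightarrow> real mat" where
  "minv A = (SOME B. B \<in> carrier_mat (dim_row A) (dim_row A) \<and>
                     A * B = 1\<^sub>m (dim_row A) \<and> B * A = 1\<^sub>m (dim_row A))"

(* K = [[0,0,1],[0,Kt,0],[1,0,0]], block sizes 1,n,1 *)
definition Kmat :: "nat \<Rightarrow> real mat \<Rightarrow> real mat" where
  "Kmat n Kt = mat (n+2) (n+2) (\<lambda>(i,j).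
     if i = 0 \<and> j = n+1 then 1
     else if i = n+1 \<and> j = 0 then 1
     else if 1 \<le> i \<and> i \<le> n \<and> 1 \<le> j \<and> j \<le> n then Kt $$ (i-1, j-1)
     else 0)"

(* x^star = x^T K, represented as the vector of its entries *)
definition star :: "real mat \<Rightarrow> real vec \<Rightarrow> real vec" where
  "star K x = transpose_mat K *\<^sub>v x"

definition Lmat :: "real mat \<Rightarrow> real vec \<Rightarrow> real vec \<Rightarrow> real mat" where
  "Lmat K u w = mat (dim_vec u) (dim_vec u) (\<lambda>(i,j). u $ i * star K w $ j - w $ i * star K u $ j)"

definition orth_group :: "real mat \<Rightarrow> real mat set" where
  "orth_group K = {P \<in> carrier_mat (dim_row K) (dim_row K). transpose_mat P * K * P = K}"

definition orth_alg :: "real mat \<Rightarrow> real mat set" where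
  "orth_alg K = {X \<in> carrier_mat (dim_row K) (dim_row K). transpose_mat X * K + K * X = 0\<^sub>m (dim_row K) (dim_row K)}"

(* the element (X, x^star ) of g^vee: the matrix [[0, x^star],[0, X]] *)
definition gv :: "real mat \<Rightarrow> real mat \<Rightarrow> real vec \<Rightarrow> real mat" where
  "gv K X x = four_block_mat (0\<^sub>m 1 1) (mat_of_row (star K x)) (0\<^sub>m (dim_row X) 1) X"

definition Pvee :: "real mat \<Rightarrow> real mat \<Rightarrow> real vec \<Rightarrow> real mat" where
  "Pvee K P p = four_block_mat (1\<^sub>m 1) (mat_of_row (star K p)) (0\<^sub>m (dim_row P) 1) P"

definition pairing :: "real mat \<Rightarrow> real mat \<Rightarrow> real vec \<Rightarrow> real mat \<Rightarrow> real vec \<Rightarrow> real" where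
  "pairing K X x Xb xb = mtrace (X * Xb) / 2 + xb \<bullet> (K *\<^sub>v x)"

end

theory Submission
  imports Defs "Jordan_Normal_Form.Determinant"
begin

text \<open>
  Only three properties of K matter: K is symmetric and K K = 1, so every P in O(V,K) has
  inverse Q = K P^T K, and K Y is skew for Y in o(V,K). Block multiplication gives
  (P^vee)^-1 = (Q, -p^* Q) and (P^vee)^-1 (Y, y^*) P^vee = (Z, y^* P - p^* Z) with
  Z = Q Y P in o(V,K). In the pairing, tr (P X Q Y) = tr (X Z) by cyclicity, skewness of K Y
  turns tr (L(Pp,Px) Y) into -2 (Pp)^* Y (Px), and the vector part contributes
  y^* P x - p^* Z x, where p^* Z x = (Pp)^* Y (Px) because K Q = P^T K.
\<close>

lemma minv_eqI:
  fixes A B :: "real mat"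
  assumes A: "A \<in> carrier_mat n n" and B: "B \<in> carrier_mat n n" and BA: "B * A = 1\<^sub>m n"
  shows "minv A = B"
proof -
  have AB: "A * B = 1\<^sub>m n" by (rule mat_mult_left_right_inverse[OF B A BA])
  have "minv A \<in> carrier_mat n n \<and> A * minv A = 1\<^sub>m n \<and> minv A * A = 1\<^sub>m n"
    unfolding minv_def carrier_matD(1)[OF A] by (rule someI[of _ B]) (use B AB BA in blast)
  then have C: "minv A \<in> carrier_mat n n" and CA: "minv A * A = 1\<^sub>m n" by auto
  have "minv A = minv A * (A * B)" using C by (simp add: AB)
  also have "\<dots> = (minv A * A) * B" using assoc_mult_mat[OF C A B] by simp
  also have "\<dots> = B" using B by (simp add: CA)
  finally show ?thesis .
qed

lemma mat_of_row_mult: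
  fixes a :: "'a :: comm_semiring_0 vec"
  assumes "a \<in> carrier_vec k" "M \<in> carrier_mat k m"
  shows "mat_of_row a * M = mat_of_row (transpose_mat M *\<^sub>v a)"
  using assms by (intro eq_matI) (auto simp: comm_scalar_prod[of _ k])

lemma mat_of_row_minus:
  fixes a b :: "'a :: ab_group_add vec"
  assumes "a \<in> carrier_vec k" "b \<in> carrier_vec k"
  shows "mat_of_row (a - b) = mat_of_row a - mat_of_row b"
  using assms by (intro eq_matI) auto

lemma scalar_prod_transpose_mult_vec:
  fixes A :: "'a :: comm_semiring_0 mat"
  assumes "A \<in> carrier_mat nr nc" "v \<in> carrier_vec nc" "w \<in> carrier_vec nr"
  shows "v \<bullet> (transpose_mat A *\<^sub>v w) = (A *\<^sub>v v) \<bullet> w"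
  using assms transpose_vec_mult_scalar[of A nr nc v w]
  by (simp add: comm_scalar_prod[of v nc] comm_scalar_prod[of _ nr w])

lemma mtrace_add:
  fixes A B :: "real mat"
  assumes "A \<in> carrier_mat m m" "B \<in> carrier_mat m m"
  shows "mtrace (A + B) = mtrace A + mtrace B"
  using assms by (simp add: mtrace_def sum.distrib)

lemma mtrace_mult_comm:
  fixes A B :: "real mat"
  assumes "A \<in> carrier_mat m k" "B \<in> carrier_mat k m"
  shows "mtrace (A * B) = mtrace (B * A)"
proof -
  have "mtrace (A * B) = (\<Sum>i<m. \<Sum>j<k. A $$ (i,j) * B $$ (j,i))"
    using assms by (simp add: mtrace_def scalar_prod_def atLeast0LessThan)
  also have "\<dots> = (\<Sum>j<k. \<Sum>i<m. B $$ (j,i) * A $$ (i,j))"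
    by (subst sum.swap) (simp add: mult.commute)
  also have "\<dots> = mtrace (B * A)"
    using assms by (simp add: mtrace_def scalar_prod_def atLeast0LessThan)
  finally show ?thesis .
qed

lemma mtrace_Lmat_mult:
  assumes K: "K \<in> carrier_mat m m" and Y: "Y \<in> carrier_mat m m"
    and u: "u \<in> carrier_vec m" and v: "v \<in> carrier_vec m"
  shows "mtrace (Lmat K u v * Y) = star K v \<bullet> (Y *\<^sub>v u) - star K u \<bullet> (Y *\<^sub>v v)"
proof -
  have "mtrace (Lmat K u v * Y)
      = (\<Sum>i<m. \<Sum>j<m. star K v $ j * (Y $$ (j,i) * u $ i))
      - (\<Sum>i<m. \<Sum>j<m. star K u $ j * (Y $$ (j,i) * v $ i))"
    using assms
    by (simp add: mtrace_def Lmat_def scalar_prod_def atLeast0LessThan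
        sum_subtractf[symmetric] algebra_simps)
  also have "\<dots> = star K v \<bullet> (Y *\<^sub>v u) - star K u \<bullet> (Y *\<^sub>v v)"
    using assms
    by (subst (1 2) sum.swap)
      (simp add: star_def scalar_prod_def mult_mat_vec_def atLeast0LessThan sum_distrib_left)
  finally show ?thesis .
qed

lemma minv_unit_upper_block:
  fixes S P Q :: "real mat"
  assumes S: "S \<in> carrier_mat 1 m" and P: "P \<in> carrier_mat m m" and Q: "Q \<in> carrier_mat m m"
    and QP: "Q * P = 1\<^sub>m m"
  shows "minv (four_block_mat (1\<^sub>m 1) S (0\<^sub>m m 1) P)
       = four_block_mat (1\<^sub>m 1) (- (S * Q)) (0\<^sub>m m 1) Q"
proof (rule minv_eqI)
  have SQ: "S * Q \<in> carrier_mat 1 m" using S Q by simp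
  have "- (S * Q) * P = - S"
    using S Q P QP by (simp add: assoc_mult_mat[OF S Q P])
  then show "four_block_mat (1\<^sub>m 1) (- (S * Q)) (0\<^sub>m m 1) Q * four_block_mat (1\<^sub>m 1) S (0\<^sub>m m 1) P
      = 1\<^sub>m (1 + m)"
    using S P Q QP SQ
    by (subst mult_four_block_mat[of _ 1 1 _ m _ m]) (auto simp: minus_add_uminus_mat[symmetric])
qed (use S P Q in auto)

lemma unit_upper_block_conj:
  fixes S T P Q Y :: "real mat"
  assumes S: "S \<in> carrier_mat 1 m" and T: "T \<in> carrier_mat 1 m"
    and P: "P \<in> carrier_mat m m" and Q: "Q \<in> carrier_mat m m" and Y: "Y \<in> carrier_mat m m"
  shows "four_block_mat (1\<^sub>m 1) (- (S * Q)) (0\<^sub>m m 1) Q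
           * four_block_mat (0\<^sub>m 1 1) T (0\<^sub>m m 1) Y
           * four_block_mat (1\<^sub>m 1) S (0\<^sub>m m 1) P
       = four_block_mat (0\<^sub>m 1 1) (T * P - S * (Q * Y * P)) (0\<^sub>m m 1) (Q * Y * P)"
    (is "?Inv * ?G * ?PV = _")
proof -
  have SQYP: "- (S * Q) * (Y * P) = - (S * (Q * Y * P))"
    using S Q Y P by (simp add: assoc_mult_mat[of _ 1 m _ m _ m])
  have "?Inv * ?G * ?PV = ?Inv * (?G * ?PV)"
    using S T P Q Y by (intro assoc_mult_mat[of _ "1 + m" "1 + m" _ "1 + m" _ "1 + m"]) auto
  also have "?G * ?PV = four_block_mat (0\<^sub>m 1 1) (T * P) (0\<^sub>m m 1) (Y * P)"
    using S T P Y by (subst mult_four_block_mat[of _ 1 1 _ m _ m]) auto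
  also have "?Inv * four_block_mat (0\<^sub>m 1 1) (T * P) (0\<^sub>m m 1) (Y * P)
      = four_block_mat (0\<^sub>m 1 1) (T * P - S * (Q * Y * P)) (0\<^sub>m m 1) (Q * Y * P)"
    using S T P Q Y SQYP
    by (subst mult_four_block_mat[of _ 1 1 _ m _ m])
      (auto simp: minus_add_uminus_mat[of _ 1 m] assoc_mult_mat[of _ m m _ m _ m])
  finally show ?thesis .
qed

lemma Kmat_carrier: "Kmat n Kt \<in> carrier_mat (n+2) (n+2)"
  by (simp add: Kmat_def)

lemma transpose_Kmat:
  assumes "Kt \<in> carrier_mat n n" "transpose_mat Kt = Kt"
  shows "transpose_mat (Kmat n Kt) = Kmat n Kt"
proof (rule eq_matI)
  have "Kt $$ (a, b) = Kt $$ (b, a)" if "a < n" "b < n" for a b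
    using assms that by (metis carrier_matD index_transpose_mat(1))
  then show "transpose_mat (Kmat n Kt) $$ (i, j) = Kmat n Kt $$ (i, j)"
    if "i < dim_row (Kmat n Kt)" "j < dim_col (Kmat n Kt)" for i j
    using that by (auto simp: Kmat_def)
qed (auto simp: Kmat_def)

lemma Kmat_involution:
  assumes Kt: "Kt \<in> carrier_mat n n" "Kt * Kt = 1\<^sub>m n"
  shows "Kmat n Kt * Kmat n Kt = 1\<^sub>m (n+2)"
proof (rule eq_matI)
  let ?K = "Kmat n Kt"
  fix i j assume "i < dim_row (1\<^sub>m (n+2))" "j < dim_col (1\<^sub>m (n+2))"
  then have ij: "i < n+2" "j < n+2" by auto
  have Kt_Kt: "(\<Sum>k<n. Kt $$ (a,k) * Kt $$ (k,b)) = (if a = b then 1 else 0)"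
    if "a < n" "b < n" for a b
  proof -
    have "(Kt * Kt) $$ (a,b) = (\<Sum>k<n. Kt $$ (a,k) * Kt $$ (k,b))"
      using that Kt(1) by (simp add: scalar_prod_def atLeast0LessThan)
    then show ?thesis using that by (simp add: Kt(2))
  qed
  have "(?K * ?K) $$ (i,j) = (\<Sum>k<Suc (Suc n). ?K $$ (i,k) * ?K $$ (k,j))"
    using ij by (simp add: Kmat_def scalar_prod_def atLeast0LessThan)
  also have "\<dots> = ?K $$ (i,0) * ?K $$ (0,j) + (\<Sum>k<n. ?K $$ (i,k+1) * ?K $$ (k+1,j))
      + ?K $$ (i,n+1) * ?K $$ (n+1,j)"
    by (subst sum.lessThan_Suc_shift) simp
  also have "\<dots> = 1\<^sub>m (n+2) $$ (i,j)"
  proof (cases "1 \<le> i \<and> i \<le> n \<and> 1 \<le> j \<and> j \<le> n")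
    case True
    then have "(\<Sum>k<n. ?K $$ (i,k+1) * ?K $$ (k+1,j)) = (\<Sum>k<n. Kt $$ (i-1,k) * Kt $$ (k,j-1))"
      by (intro sum.cong) (auto simp: Kmat_def)
    with True show ?thesis using Kt_Kt[of "i-1" "j-1"] ij by (auto simp: Kmat_def)
  next
    case False
    then have "(\<Sum>k<n. ?K $$ (i,k+1) * ?K $$ (k+1,j)) = 0"
      using ij by (intro sum.neutral) (auto simp: Kmat_def)
    with False show ?thesis using ij by (auto simp: Kmat_def)
  qed
  finally show "(?K * ?K) $$ (i,j) = 1\<^sub>m (n+2) $$ (i,j)" .
qed (auto simp: Kmat_def)

locale symmetric_involution =
  fixes K :: "real mat" and m :: nat
  assumes K_carrier: "K \<in> carrier_mat m m"
    and K_sym: "transpose_mat K = K"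
    and K_involution: "K * K = 1\<^sub>m m"
begin

lemma star_eq: "star K v = K *\<^sub>v v"
  by (simp add: star_def K_sym)

lemma K_mult_K_mult_vec: "v \<in> carrier_vec m \<Longrightarrow> K *\<^sub>v (K *\<^sub>v v) = v"
  using assoc_mult_mat_vec[OF K_carrier K_carrier] by (simp add: K_involution)

lemma K_mult_vec_scalar_prod:
  "u \<in> carrier_vec m \<Longrightarrow> v \<in> carrier_vec m \<Longrightarrow> (K *\<^sub>v u) \<bullet> v = u \<bullet> (K *\<^sub>v v)"
  using transpose_vec_mult_scalar[OF K_carrier] by (simp add: K_sym)

lemma orth_groupD:
  assumes "P \<in> orth_group K"
  shows "P \<in> carrier_mat m m" "transpose_mat P * K * P = K"
  using assms K_carrier by (auto simp: orth_group_def)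

lemma orth_algD:
  assumes "Y \<in> orth_alg K"
  shows "Y \<in> carrier_mat m m" "transpose_mat Y * K = - (K * Y)"
proof -
  show Y: "Y \<in> carrier_mat m m" using assms K_carrier by (auto simp: orth_alg_def)
  have sum_zero: "transpose_mat Y * K + K * Y = 0\<^sub>m m m"
    using assms K_carrier by (auto simp: orth_alg_def)
  show "transpose_mat Y * K = - (K * Y)"
  proof (intro eq_matI)
    fix i j assume "i < dim_row (- (K * Y))" "j < dim_col (- (K * Y))"
    with Y K_carrier have ij: "i < m" "j < m" by auto
    from sum_zero have "(transpose_mat Y * K + K * Y) $$ (i, j) = 0" using ij by simp
    then show "(transpose_mat Y * K) $$ (i, j) = (- (K * Y)) $$ (i, j)"
      using Y K_carrier ij by simp
  qed (use Y K_carrier in auto)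
qed

lemma orth_group_left_inverse:
  assumes "P \<in> orth_group K"
  shows "K * transpose_mat P * K * P = 1\<^sub>m m"
proof -
  have P: "P \<in> carrier_mat m m" and PKP: "transpose_mat P * K * P = K"
    using orth_groupD[OF assms] by auto
  have "K * transpose_mat P * K * P = K * (transpose_mat P * K * P)"
    using P K_carrier by (simp add: assoc_mult_mat[of _ m m _ m _ m])
  then show ?thesis by (simp add: PKP K_involution)
qed

lemma orth_group_minv:
  assumes "P \<in> orth_group K"
  shows "minv P = K * transpose_mat P * K"
  using orth_groupD(1)[OF assms] K_carrier
  by (intro minv_eqI[of _ m] orth_group_left_inverse[OF assms]) auto

lemma orth_group_minv_carrier:
  assumes "P \<in> orth_group K"
  shows "minv P \<in> carrier_mat m m"
  using orth_groupD(1)[OF assms] K_carrier by (simp add: orth_group_minv[OF assms])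

lemma minv_mult_orth_group:
  assumes "P \<in> orth_group K"
  shows "minv P * P = 1\<^sub>m m"
  using orth_group_left_inverse[OF assms] by (simp add: orth_group_minv[OF assms])

lemma K_mult_minv_orth_group:
  assumes "P \<in> orth_group K"
  shows "K * minv P = transpose_mat P * K"
proof -
  have P: "P \<in> carrier_mat m m" using orth_groupD[OF assms] by auto
  have "K * minv P = (K * K) * (transpose_mat P * K)"
    using P K_carrier by (simp add: orth_group_minv[OF assms] assoc_mult_mat[of _ m m _ m _ m])
  then show ?thesis using P K_carrier by (simp add: K_involution)
qed

lemma transpose_minv_orth_group:
  assumes "P \<in> orth_group K"
  shows "transpose_mat (minv P) = K * P * K"
  using orth_groupD(1)[OF assms] K_carrier
  by (simp add: orth_group_minv[OF assms] K_sym transpose_mult[of _ m m _ m]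
      assoc_mult_mat[of _ m m _ m _ m])

lemma orth_alg_conj:
  assumes P: "P \<in> orth_group K" and Y: "Y \<in> orth_alg K"
  shows "minv P * Y * P \<in> orth_alg K"
proof -
  have Pc: "P \<in> carrier_mat m m" and Yc: "Y \<in> carrier_mat m m"
    and Qc: "minv P \<in> carrier_mat m m"
    using orth_groupD(1)[OF P] orth_algD(1)[OF Y] orth_group_minv_carrier[OF P] .
  note assoc = assoc_mult_mat[of _ m m _ m _ m]
  have "transpose_mat (minv P * Y * P) * K = transpose_mat P * transpose_mat Y * (K * P * K) * K"
    using Pc Yc Qc K_carrier
    by (simp add: transpose_mult[of _ m m _ m] transpose_minv_orth_group[OF P])
  also have "\<dots> = transpose_mat P * (transpose_mat Y * K) * P * (K * K)"
    using Pc Yc K_carrier by (simp add: assoc)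
  also have "\<dots> = - (transpose_mat P * (K * Y) * P)"
    using Pc Yc K_carrier by (simp add: K_involution orth_algD(2)[OF Y])
  finally have "transpose_mat (minv P * Y * P) * K = - (transpose_mat P * (K * Y) * P)" .
  moreover have "K * (minv P * Y * P) = transpose_mat P * (K * Y) * P"
  proof -
    have "K * (minv P * Y * P) = (K * minv P) * Y * P"
      using Pc Yc Qc K_carrier by (simp add: assoc)
    then show ?thesis using Pc Yc K_carrier by (simp add: K_mult_minv_orth_group[OF P] assoc)
  qed
  moreover have "transpose_mat P * (K * Y) * P \<in> carrier_mat m m"
    using Pc Yc K_carrier by (meson mult_carrier_mat transpose_carrier_mat)
  ultimately have "transpose_mat (minv P * Y * P) * K + K * (minv P * Y * P) = 0\<^sub>m m m"
    by simp
  then show ?thesis using Pc Yc Qc K_carrier by (simp add: orth_alg_def)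
qed

lemma orth_alg_skew:
  assumes Y: "Y \<in> orth_alg K" and u: "u \<in> carrier_vec m" and v: "v \<in> carrier_vec m"
  shows "u \<bullet> (K *\<^sub>v (Y *\<^sub>v v)) = - (v \<bullet> (K *\<^sub>v (Y *\<^sub>v u)))"
proof -
  have Yc: "Y \<in> carrier_mat m m" by (rule orth_algD(1)[OF Y])
  have "u \<bullet> (K *\<^sub>v (Y *\<^sub>v v)) = (transpose_mat (K * Y) *\<^sub>v u) \<bullet> v"
    using transpose_vec_mult_scalar[of "K * Y" m m v u] Yc K_carrier u v by simp
  also have "\<dots> = (- (K * Y) *\<^sub>v u) \<bullet> v"
    using Yc K_carrier by (simp add: transpose_mult[of _ m m _ m] K_sym orth_algD(2)[OF Y])
  also have "\<dots> = - (v \<bullet> (K *\<^sub>v (Y *\<^sub>v u)))"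
    using Yc K_carrier u v by (simp add: comm_scalar_prod[of _ m])
  finally show ?thesis .
qed

lemma mtrace_Lmat_mult_orth_alg:
  assumes Y: "Y \<in> orth_alg K" and u: "u \<in> carrier_vec m" and v: "v \<in> carrier_vec m"
  shows "mtrace (Lmat K u v * Y) = - 2 * (u \<bullet> (K *\<^sub>v (Y *\<^sub>v v)))"
proof -
  have Yc: "Y \<in> carrier_mat m m" by (rule orth_algD(1)[OF Y])
  have "mtrace (Lmat K u v * Y) = v \<bullet> (K *\<^sub>v (Y *\<^sub>v u)) - u \<bullet> (K *\<^sub>v (Y *\<^sub>v v))"
    using mtrace_Lmat_mult[OF K_carrier Yc u v] Yc u v
    by (simp add: star_eq K_mult_vec_scalar_prod)
  then show ?thesis by (simp add: orth_alg_skew[OF Y v u])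
qed

lemma conj_gv_Pvee:
  assumes P: "P \<in> orth_group K" and Y: "Y \<in> carrier_mat m m"
    and p: "p \<in> carrier_vec m" and y: "y \<in> carrier_vec m"
  defines "Z \<equiv> minv P * Y * P"
  shows "minv (Pvee K P p) * gv K Y y * Pvee K P p
       = gv K Z (K *\<^sub>v (transpose_mat P *\<^sub>v (K *\<^sub>v y) - transpose_mat Z *\<^sub>v (K *\<^sub>v p)))"
proof -
  have Pc: "P \<in> carrier_mat m m" and Qc: "minv P \<in> carrier_mat m m"
    using orth_groupD(1)[OF P] orth_group_minv_carrier[OF P] .
  have Zc: "Z \<in> carrier_mat m m" unfolding Z_def using Pc Qc Y by simp
  have Kp: "K *\<^sub>v p \<in> carrier_vec m" and Ky: "K *\<^sub>v y \<in> carrier_vec m"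
    using K_carrier p y by auto
  let ?Sp = "mat_of_row (K *\<^sub>v p)" and ?Sy = "mat_of_row (K *\<^sub>v y)"
  have Sp: "?Sp \<in> carrier_mat 1 m" and Sy: "?Sy \<in> carrier_mat 1 m"
    using Kp Ky by auto
  have "minv (Pvee K P p) = four_block_mat (1\<^sub>m 1) (- (?Sp * minv P)) (0\<^sub>m m 1) (minv P)"
    unfolding Pvee_def star_eq
    using minv_unit_upper_block[OF Sp Pc Qc minv_mult_orth_group[OF P]] Pc by simp
  then have "minv (Pvee K P p) * gv K Y y * Pvee K P p
      = four_block_mat (0\<^sub>m 1 1) (?Sy * P - ?Sp * Z) (0\<^sub>m m 1) Z"
    unfolding Pvee_def gv_def star_eq Z_def
    using unit_upper_block_conj[OF Sp Sy Pc Qc Y] Pc Y by simp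
  also have "?Sy * P - ?Sp * Z = mat_of_row (transpose_mat P *\<^sub>v (K *\<^sub>v y) - transpose_mat Z *\<^sub>v (K *\<^sub>v p))"
    using Kp Ky Pc Zc by (simp add: mat_of_row_mult[of _ m] mat_of_row_minus[of _ m])
  finally show ?thesis
    unfolding gv_def star_eq using Pc Zc Kp Ky by (simp add: K_mult_K_mult_vec)
qed

lemma mtrace_conj_add_Lmat_mult:
  assumes P: "P \<in> orth_group K" and X: "X \<in> carrier_mat m m" and Y: "Y \<in> orth_alg K"
    and u: "u \<in> carrier_vec m" and v: "v \<in> carrier_vec m"
  shows "mtrace ((P * X * minv P + Lmat K u v) * Y)
       = mtrace (X * (minv P * Y * P)) - 2 * (u \<bullet> (K *\<^sub>v (Y *\<^sub>v v)))"
proof -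
  have Pc: "P \<in> carrier_mat m m" and Qc: "minv P \<in> carrier_mat m m"
    and Yc: "Y \<in> carrier_mat m m"
    using orth_groupD(1)[OF P] orth_group_minv_carrier[OF P] orth_algD(1)[OF Y] .
  have Lc: "Lmat K u v \<in> carrier_mat m m" using u by (simp add: Lmat_def)
  note assoc = assoc_mult_mat[of _ m m _ m _ m]
  have "mtrace ((P * X * minv P + Lmat K u v) * Y)
      = mtrace (P * (X * minv P * Y)) + mtrace (Lmat K u v * Y)"
    using Pc X Qc Yc Lc by (simp add: add_mult_distrib_mat[of _ m m] mtrace_add[of _ m] assoc)
  also have "mtrace (P * (X * minv P * Y)) = mtrace (X * (minv P * Y * P))"
    using Pc X Qc Yc by (simp add: mtrace_mult_comm[of P m m] assoc)
  finally show ?thesis by (simp add: mtrace_Lmat_mult_orth_alg[OF Y u v])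
qed

lemma conj_vec_scalar_prod:
  assumes P: "P \<in> orth_group K" and Y: "Y \<in> carrier_mat m m"
    and p: "p \<in> carrier_vec m" and x: "x \<in> carrier_vec m" and y: "y \<in> carrier_vec m"
  defines "Z \<equiv> minv P * Y * P"
  shows "(K *\<^sub>v (transpose_mat P *\<^sub>v (K *\<^sub>v y) - transpose_mat Z *\<^sub>v (K *\<^sub>v p))) \<bullet> (K *\<^sub>v x)
       = y \<bullet> (K *\<^sub>v (P *\<^sub>v x)) - (P *\<^sub>v p) \<bullet> (K *\<^sub>v (Y *\<^sub>v (P *\<^sub>v x)))"
proof -
  have Pc: "P \<in> carrier_mat m m" and Qc: "minv P \<in> carrier_mat m m"
    using orth_groupD(1)[OF P] orth_group_minv_carrier[OF P] .
  have Zc: "Z \<in> carrier_mat m m" unfolding Z_def using Pc Qc Y by simp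
  note assoc = assoc_mult_mat[of _ m m _ m _ m] assoc_mult_mat_vec[of _ m m _ m]
  have "K *\<^sub>v (Z *\<^sub>v x) = (K * minv P * Y * P) *\<^sub>v x"
    using Pc Qc Y K_carrier x by (simp add: Z_def assoc)
  also have "\<dots> = transpose_mat P *\<^sub>v (K *\<^sub>v (Y *\<^sub>v (P *\<^sub>v x)))"
    using Pc Y K_carrier x by (simp add: K_mult_minv_orth_group[OF P] assoc)
  finally have Zx: "(transpose_mat Z *\<^sub>v (K *\<^sub>v p)) \<bullet> x = (P *\<^sub>v p) \<bullet> (K *\<^sub>v (Y *\<^sub>v (P *\<^sub>v x)))"
    using Zc Pc Y K_carrier p x
    by (simp add: transpose_vec_mult_scalar[OF Zc x] K_mult_vec_scalar_prod
        scalar_prod_transpose_mult_vec[OF Pc])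
  have Px: "(transpose_mat P *\<^sub>v (K *\<^sub>v y)) \<bullet> x = y \<bullet> (K *\<^sub>v (P *\<^sub>v x))"
    using Pc K_carrier x y
    by (simp add: transpose_vec_mult_scalar[OF Pc x] K_mult_vec_scalar_prod)
  show ?thesis
    using K_carrier Pc Zc x y p
    by (simp add: K_mult_vec_scalar_prod K_mult_K_mult_vec minus_scalar_prod_distrib[of _ m] Px Zx)
qed

lemma pairing_conj_Pvee:
  assumes P: "P \<in> orth_group K" and X: "X \<in> carrier_mat m m" and Y: "Y \<in> orth_alg K"
    and p: "p \<in> carrier_vec m" and x: "x \<in> carrier_vec m" and y: "y \<in> carrier_vec m"
  defines "Z \<equiv> minv P * Y * P"
  shows "pairing K (P * X * minv P + Lmat K (P *\<^sub>v p) (P *\<^sub>v x)) (P *\<^sub>v x) Y y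
       = pairing K X x Z (K *\<^sub>v (transpose_mat P *\<^sub>v (K *\<^sub>v y) - transpose_mat Z *\<^sub>v (K *\<^sub>v p)))"
proof -
  have Pc: "P \<in> carrier_mat m m" by (rule orth_groupD(1)[OF P])
  show ?thesis
    unfolding pairing_def Z_def
    using mtrace_conj_add_Lmat_mult[OF P X Y, of "P *\<^sub>v p" "P *\<^sub>v x"]
      conj_vec_scalar_prod[OF P orth_algD(1)[OF Y] p x y] Pc p x
    by simp
qed

end

theorem lemma3:
  fixes n :: nat and Kt P X Y :: "real mat" and p x y :: "real vec"
  defines "K \<equiv> Kmat n Kt"
  assumes Kt: "Kt \<in> carrier_mat n n" "transpose_mat Kt = Kt" "Kt * Kt = 1\<^sub>m n"
    and P: "P \<in> orth_group K"
    and p: "p \<in> carrier_vec (n+2)" and x: "x \<in> carrier_vec (n+2)"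
    and X: "X \<in> orth_alg K"
    and Y: "Y \<in> orth_alg K" and y: "y \<in> carrier_vec (n+2)"
  shows "\<exists>Z z. Z \<in> orth_alg K \<and> z \<in> carrier_vec (n+2) \<and>
           minv (Pvee K P p) * gv K Y y * Pvee K P p = gv K Z z \<and>
           pairing K (P * X * minv P + Lmat K (P *\<^sub>v p) (P *\<^sub>v x)) (P *\<^sub>v x) Y y
             = pairing K X x Z z"
proof -
  interpret symmetric_involution K "n+2"
    unfolding K_def
    by unfold_locales (use Kmat_carrier transpose_Kmat[OF Kt(1,2)] Kmat_involution[OF Kt(1,3)] in auto)
  define Z where "Z = minv P * Y * P"
  define z where "z = K *\<^sub>v (transpose_mat P *\<^sub>v (K *\<^sub>v y) - transpose_mat Z *\<^sub>v (K *\<^sub>v p))"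
  show ?thesis
  proof (intro exI conjI)
    show "Z \<in> orth_alg K"
      unfolding Z_def by (rule orth_alg_conj[OF P Y])
    show "z \<in> carrier_vec (n+2)"
      unfolding z_def carrier_vec_def using K_carrier by simp
    show "minv (Pvee K P p) * gv K Y y * Pvee K P p = gv K Z z"
      unfolding Z_def z_def by (rule conj_gv_Pvee[OF P orth_algD(1)[OF Y] p y])
    show "pairing K (P * X * minv P + Lmat K (P *\<^sub>v p) (P *\<^sub>v x)) (P *\<^sub>v x) Y y
        = pairing K X x Z z"
      unfolding Z_def z_def by (rule pairing_conj_Pvee[OF P orth_algD(1)[OF X] Y p x y])
  qed
qed

end
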